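(* Let $t$ be a positive integer. The number of odd entries on row $n$ of the truncated Pascal triangle $(\mathfrak{a}_t(n,k))$ is a power of two for every nonnegative integer $n$ if and only if $t$ is a power of two (i.e. $t=2^q$ for some integer $q\ge 0$). Moreover, in this case, for every nonnegative integer $n$ the number of odd entries on row $n$ is exactly $\frac12\cdot 2^{d(n+t)}$.
   Context: Fix a positive integer $t$. Let $\mathfrak{a}_t:\mathbb{Z}\times\mathbb{Z}\to\mathbb{Z}$ be the unique function satisfying: (i) $\mathfrak{a}_t(0,0)=1$; (ii) $\mathfrak{a}_t(n,k)=0$ if $n<0$, or $k<0$, or $k>\min\{\lfloor (n-1+t)/2\rfloor, n\}$; (iii) $\mathfrak{a}_t(n,k)=\mathfrak{a}_t(n-1,k-1)+\mathfrak{a}_t(n-1,k)$ for all other integer pairs $(n,k)$ (these necessarily have $n>0$). The truncated Pascal triangle is the array $(\mathfrak{a}_t(n,k))_{0\le k\le n}$; row $n$ consists of the entries $\mathfrak{a}_t(n,k)$ for $0\le k\le n$, and "the number of odd entries on row $n$" means the number of $k\in\{0,\dots,n\}$ with $\mathfrak{a}_t(n,k)$ odd. For a nonnegative integer $m$, $d(m)$ denotes the number of nonzero digits (ones) in the base-$2$ representation of $m$ (with $d(0)=0$). *)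

theory Defs
  imports Main
begin

fun trunc_pascal_nat :: "nat \<Rightarrow> nat \<Rightarrow> int \<Rightarrow> int" where
  "trunc_pascal_nat t 0 k = (if k = 0 then 1 else 0)"
| "trunc_pascal_nat t (Suc m) k =
     (if k < 0 \<or> k > min ((int (Suc m) - 1 + int t) div 2) (int (Suc m)) then 0
      else trunc_pascal_nat t m (k - 1) + trunc_pascal_nat t m k)"

definition trunc_pascal :: "nat \<Rightarrow> int \<Rightarrow> int \<Rightarrow> int" where
  "trunc_pascal t n k = (if n < 0 then 0 else trunc_pascal_nat t (nat n) k)"

definition odd_count :: "nat \<Rightarrow> nat \<Rightarrow> nat" where
  "odd_count t n = card {k \<in> {0..n}. odd (trunc_pascal t (int n) (int k))}"

fun bin_digits :: "nat \<Rightarrow> nat" where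
  "bin_digits m = (if m = 0 then 0 else m mod 2 + bin_digits (m div 2))"

declare bin_digits.simps [simp del]

end

theory Submission
  imports Defs "HOL-Number_Theory.Cong"
begin

text \<open>By the reflection principle, \<open>a\<^sub>t(n, k) = C(n, k) - C(n, k - t)\<close> for \<open>2k < n + t\<close> and
  \<open>0\<close> otherwise. If \<open>t = 2\<^sup>q\<close>, then \<open>(1 + x)\<^sup>t \<equiv> 1 + x\<^sup>t (mod 2)\<close> turns this entry modulo 2 into
  \<open>C(n + t, k)\<close>, so the odd entries of row \<open>n\<close> are the odd entries of the first half of row
  \<open>n + t\<close> of Pascal's triangle. By Lucas' theorem row \<open>N\<close> has \<open>2\<^bsup>d(N)\<^esup>\<close> odd entries, and since
  its central entry is even they are evenly split between the two halves. Conversely, row \<open>t\<close>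
  of the truncated triangle is row \<open>t\<close> of Pascal's triangle minus its last entry, so it has
  \<open>2\<^bsup>d(t)\<^esup> - 1\<close> odd entries, a power of two only when \<open>d(t) = 1\<close>.\<close>

definition binom :: "nat \<Rightarrow> int \<Rightarrow> int" where
  "binom n k = (if k < 0 then 0 else int (n choose nat k))"

lemma binom_of_nat [simp]: "binom n (int k) = int (n choose k)"
  by (simp add: binom_def)

lemma binom_eq_0: "k < 0 \<or> int n < k \<Longrightarrow> binom n k = 0"
  by (auto simp: binom_def)

lemma binom_Suc: "binom (Suc n) k = binom n (k - 1) + binom n k"
proof (cases "k \<le> 0")
  case True
  then show ?thesis by (cases "k = 0") (auto simp: binom_def)
next
  case False
  then have "nat k = Suc (nat (k - 1))" by simp
  then show ?thesis using False by (simp add: binom_def)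
qed

lemma binom_symmetric: "binom n (int n - k) = binom n k"
proof (cases "0 \<le> k \<and> k \<le> int n")
  case True
  then have "nat (int n - k) = n - nat k" "nat k \<le> n" by auto
  then show ?thesis using True by (simp add: binom_def binomial_symmetric[symmetric])
qed (auto simp: binom_def)

lemma trunc_pascal_nat_eq_binom_diff:
  assumes "t > 0"
  shows "trunc_pascal_nat t n k =
           (if 2 * k < int n + int t then binom n k - binom n (k - int t) else 0)"
proof (induction n arbitrary: k)
  case 0
  then show ?case using assms by (auto simp: binom_def)
next
  case (Suc n)
  show ?case
  proof (cases "2 * k < int (Suc n) + int t")
    case False
    then show ?thesis by auto
  next
    case in_range: True
    have left: "trunc_pascal_nat t n (k - 1) = binom n (k - 1) - binom n (k - 1 - int t)"
      using Suc.IH[of "k - 1"] in_range by simp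
    have right: "trunc_pascal_nat t n k = binom n k - binom n (k - int t)"
    proof (cases "2 * k < int n + int t")
      case True
      then show ?thesis using Suc.IH[of k] by simp
    next
      case False
      \<comment> \<open>on the line of reflection the two binomials coincide\<close>
      then have "k - int t = int n - k" using in_range by linarith
      then have "binom n (k - int t) = binom n k" by (metis binom_symmetric)
      then show ?thesis using Suc.IH[of k] False by simp
    qed
    show ?thesis
    proof (cases "0 \<le> k \<and> k \<le> int (Suc n)")
      case True
      then show ?thesis using left right in_range by (auto simp: binom_Suc algebra_simps)
    next
      case False
      then have "k < 0 \<or> int (Suc n) < k" "k - int t < 0" using in_range by linarith+
      then show ?thesis using in_range by (auto simp: binom_eq_0)
    qed
  qed
qed

lemma binom_add_power2_cong:
  "[binom (n + 2 ^ q) k = binom n k + binom n (k - 2 ^ q)] (mod 2)"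
proof (induction q arbitrary: n k)
  case 0
  show ?case by (simp add: binom_Suc add.commute)
next
  case (Suc q)
  let ?a = "binom n k" and ?b = "binom n (k - 2 ^ q)" and ?c = "binom n (k - 2 ^ Suc q)"
  have "k - 2 ^ Suc q = k - 2 ^ q - 2 ^ q" by simp
  then have "[binom (n + 2 ^ q) (k - 2 ^ q) = ?b + ?c] (mod 2)"
    using Suc.IH[of n "k - 2 ^ q"] by simp
  then have "[binom (n + 2 ^ q) k + binom (n + 2 ^ q) (k - 2 ^ q) = (?a + ?b) + (?b + ?c)] (mod 2)"
    using Suc.IH[of n k] by (intro cong_add)
  moreover have "[(?a + ?b) + (?b + ?c) = ?a + ?c] (mod 2)"
    by (simp add: cong_iff_dvd_diff)
  moreover have "[binom (n + 2 ^ Suc q) k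
                    = binom (n + 2 ^ q) k + binom (n + 2 ^ q) (k - 2 ^ q)] (mod 2)"
    using Suc.IH[of "n + 2 ^ q" k] by (simp add: add.assoc mult_2)
  ultimately show ?case by (metis cong_trans)
qed

lemma choose_double_parity:
  "(odd ((2 * m) choose (2 * j)) \<longleftrightarrow> odd (m choose j)) \<and> even ((2 * m) choose Suc (2 * j))"
proof (induction m arbitrary: j)
  case 0
  then show ?case by (cases j) auto
next
  case (Suc m)
  have two_Suc: "2 * Suc m = Suc (Suc (2 * m))" by simp
  show ?case
  proof (cases j)
    case 0
    then show ?thesis by (simp add: two_Suc)
  next
    case (Suc i)
    \<comment> \<open>two steps of Pascal's rule: the middle term occurs twice\<close>
    have "Suc (Suc (2 * m)) choose Suc (Suc (2 * i)) =
        (2 * m choose (2 * i)) + 2 * (2 * m choose Suc (2 * i)) + (2 * m choose (2 * Suc i))"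
      "Suc (Suc (2 * m)) choose Suc (Suc (Suc (2 * i))) =
        (2 * m choose Suc (2 * i)) + 2 * (2 * m choose (2 * Suc i)) + (2 * m choose Suc (2 * Suc i))"
      by simp_all
    then show ?thesis using Suc Suc.IH[of i] Suc.IH[of "Suc i"] by (simp add: two_Suc)
  qed
qed

lemma odd_choose_iff:
  "odd (N choose k) \<longleftrightarrow> k mod 2 \<le> N mod 2 \<and> odd ((N div 2) choose (k div 2))"
proof -
  define m j where "m = N div 2" and "j = k div 2"
  have N: "N = 2 * m + N mod 2" and k: "k = 2 * j + k mod 2"
    by (simp_all add: m_def j_def)
  consider
      "N mod 2 = 0" "k mod 2 = 0" | "N mod 2 = 0" "k mod 2 = 1"
    | "N mod 2 = 1" "k mod 2 = 0" | "N mod 2 = 1" "k mod 2 = 1"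
    by (metis mod2_eq_if)
  then have "odd (N choose k) \<longleftrightarrow> k mod 2 \<le> N mod 2 \<and> odd (m choose j)" (is ?P)
  proof cases
    case 1
    then have "N = 2 * m" "k = 2 * j" using N k by simp_all
    then show ?P using 1 choose_double_parity[of m j] by simp
  next
    case 2
    then have "N = 2 * m" "k = Suc (2 * j)" using N k by simp_all
    then show ?P using 2 choose_double_parity[of m j] by simp
  next
    case 3
    then have N': "N = Suc (2 * m)" and k': "k = 2 * j" using N k by simp_all
    show ?P
    proof (cases j)
      case 0
      then show ?P using 3 N' k' by simp
    next
      case (Suc i)
      then have "N choose k = (2 * m choose Suc (2 * i)) + (2 * m choose (2 * j))"
        using N' k' by simp
      then show ?P using 3 choose_double_parity[of m j] choose_double_parity[of m i] by simp
    qed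
  next
    case 4
    then have "N = Suc (2 * m)" "k = Suc (2 * j)" using N k by simp_all
    then have "N choose k = (2 * m choose (2 * j)) + (2 * m choose Suc (2 * j))" by simp
    then show ?P using 4 choose_double_parity[of m j] by simp
  qed
  then show ?thesis by (simp add: m_def j_def)
qed

lemma bin_digits_eq: "bin_digits N = N mod 2 + bin_digits (N div 2)"
  by (cases "N = 0") (simp_all add: bin_digits.simps[of N])

definition odd_binomials :: "nat \<Rightarrow> nat set" where
  "odd_binomials N = {k. odd (N choose k)}"

lemma odd_binomials_subset_atMost: "odd_binomials N \<subseteq> {..N}"
  by (auto simp: odd_binomials_def) (metis binomial_eq_0 even_zero not_le)

lemma finite_odd_binomials: "finite (odd_binomials N)"
  using finite_subset[OF odd_binomials_subset_atMost] by blast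

lemma odd_binomials_eq_image:
  "odd_binomials N = (\<lambda>(j, s). 2 * j + s) ` (odd_binomials (N div 2) \<times> {..N mod 2})"
    (is "_ = ?f ` ?A")
proof (intro equalityI subsetI)
  fix k :: nat
  assume "k \<in> odd_binomials N"
  then have "(k div 2, k mod 2) \<in> ?A" by (simp add: odd_binomials_def odd_choose_iff[of N k])
  moreover have "k = ?f (k div 2, k mod 2)" by simp
  ultimately show "k \<in> ?f ` ?A" by blast
next
  fix k :: nat
  assume "k \<in> ?f ` ?A"
  then obtain j s where "k = 2 * j + s" and j: "j \<in> odd_binomials (N div 2)" and s: "s \<le> N mod 2"
    by auto
  then have "k div 2 = j" "k mod 2 = s"
    using mod_less_divisor[of 2 N] by presburger+
  then show "k \<in> odd_binomials N" using j s by (simp add: odd_binomials_def odd_choose_iff[of N k])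
qed

theorem card_odd_binomials: "card (odd_binomials N) = 2 ^ bin_digits N"
proof (induction N rule: less_induct)
  case (less N)
  show ?case
  proof (cases "N = 0")
    case True
    then have "odd_binomials N = {0}"
      using odd_binomials_subset_atMost[of 0] by (auto simp: odd_binomials_def)
    then show ?thesis using True by (simp add: bin_digits.simps)
  next
    case False
    have "inj_on (\<lambda>(j, s). 2 * j + s) (odd_binomials (N div 2) \<times> {..N mod 2})"
    proof (rule inj_onI, clarify)
      fix j s j' s' :: nat
      assume "s \<le> N mod 2" "s' \<le> N mod 2" "2 * j + s = 2 * j' + s'"
      then show "j = j' \<and> s = s'" using mod_less_divisor[of 2 N] by presburger
    qed
    then have "card (odd_binomials N) = card (odd_binomials (N div 2)) * card {..N mod 2}"
      by (simp add: odd_binomials_eq_image[of N] card_image card_cartesian_product)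
    also have "\<dots> = 2 ^ bin_digits (N div 2) * 2 ^ (N mod 2)"
      using less.IH[of "N div 2"] False by (auto simp: mod2_eq_if)
    finally show ?thesis by (simp add: bin_digits_eq[of N] power_add)
  qed
qed

lemma even_central_binomial: "m > 0 \<Longrightarrow> even ((2 * m) choose m)"
proof -
  assume "m > 0"
  then obtain p where p: "m = Suc p" using not0_implies_Suc by blast
  then have "(2 * m) choose m = (Suc (2 * p) choose p) + (Suc (2 * p) choose Suc p)" by simp
  moreover have "Suc (2 * p) choose Suc p = Suc (2 * p) choose p"
    using binomial_symmetric[of "Suc p" "Suc (2 * p)"] by simp
  ultimately show ?thesis by simp
qed

lemma card_odd_binomials_below_half:
  assumes "N > 0"
  shows "2 * card {k. 2 * k < N \<and> odd (N choose k)} = card (odd_binomials N)"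
proof -
  define H where "H = {k. 2 * k < N \<and> odd (N choose k)}"
  have "finite H" by (rule finite_subset[of _ "{..N}"]) (auto simp: H_def)
  have inj: "inj_on (\<lambda>k. N - k) H" by (auto simp: H_def inj_on_def)
  have reflect: "N choose (N - k) = N choose k" if "k \<le> N" for k
    using binomial_symmetric[OF that] by simp
  have "odd_binomials N = H \<union> (\<lambda>k. N - k) ` H"
  proof (intro equalityI subsetI)
    fix k
    assume "k \<in> odd_binomials N"
    then have odd_k: "odd (N choose k)" and "k \<le> N"
      using odd_binomials_subset_atMost by (auto simp: odd_binomials_def)
    moreover have "2 * k \<noteq> N"
      using even_central_binomial[of k] odd_k assms by (cases "k = 0") auto
    ultimately have "k \<in> H \<or> (N - k \<in> H \<and> k = N - (N - k))"
      using reflect by (auto simp: H_def)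
    then show "k \<in> H \<union> (\<lambda>k. N - k) ` H" by blast
  next
    fix k
    assume "k \<in> H \<union> (\<lambda>k. N - k) ` H"
    then show "k \<in> odd_binomials N" using reflect by (auto simp: H_def odd_binomials_def)
  qed
  moreover have "H \<inter> (\<lambda>k. N - k) ` H = {}" by (auto simp: H_def)
  ultimately have "card (odd_binomials N) = card H + card ((\<lambda>k. N - k) ` H)"
    using \<open>finite H\<close> by (simp add: card_Un_disjoint)
  then show ?thesis using card_image[OF inj] by (simp add: H_def)
qed

lemma odd_trunc_pascal_iff:
  assumes "t = 2 ^ q"
  shows "odd (trunc_pascal t (int n) (int k)) \<longleftrightarrow> 2 * k < n + t \<and> odd ((n + t) choose k)"
proof -
  have "[binom (n + t) (int k) = binom n (int k) + binom n (int k - int t)] (mod 2)"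
    using binom_add_power2_cong[of n q "int k"] assms by simp
  then have "even (binom (n + t) (int k)) \<longleftrightarrow> even (binom n (int k) + binom n (int k - int t))"
    by (metis cong_def even_iff_mod_2_eq_zero)
  moreover have "t > 0" using assms by simp
  ultimately show ?thesis by (simp add: trunc_pascal_def trunc_pascal_nat_eq_binom_diff)
qed

lemma trunc_pascal_nat_eq_0_beyond_row:
  assumes "t > 0" "int n < k"
  shows "trunc_pascal_nat t n k = 0"
  using assms by (simp add: trunc_pascal_nat_eq_binom_diff binom_eq_0)

lemma odd_count_power2:
  assumes "t = 2 ^ q"
  shows "odd_count t n = card {k. 2 * k < n + t \<and> odd ((n + t) choose k)}"
proof -
  have "k \<le> n" if "odd (trunc_pascal t (int n) (int k))" for k
    using that trunc_pascal_nat_eq_0_beyond_row[of t n "int k"] assms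
    by (force simp: trunc_pascal_def)
  then have "{k \<in> {0..n}. odd (trunc_pascal t (int n) (int k))}
           = {k. odd (trunc_pascal t (int n) (int k))}" by auto
  then show ?thesis by (simp add: odd_count_def odd_trunc_pascal_iff[OF assms])
qed

lemma odd_count_self:
  assumes "t > 0"
  shows "odd_count t t = 2 ^ bin_digits t - 1"
proof -
  have "trunc_pascal t (int t) (int k) = (if k < t then int (t choose k) else 0)" if "k \<le> t" for k
    using that assms by (simp add: trunc_pascal_def trunc_pascal_nat_eq_binom_diff binom_eq_0)
  then have "{k \<in> {0..t}. odd (trunc_pascal t (int t) (int k))} = odd_binomials t - {t}"
    using odd_binomials_subset_atMost[of t] by (auto simp: odd_binomials_def split: if_splits)
  moreover have "t \<in> odd_binomials t" by (simp add: odd_binomials_def)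
  ultimately show ?thesis
    by (simp add: odd_count_def card_Diff_singleton finite_odd_binomials card_odd_binomials)
qed

lemma bin_digits_0 [simp]: "bin_digits 0 = 0"
  by (simp add: bin_digits.simps)

lemma bin_digits_eq_0_iff: "bin_digits m = 0 \<longleftrightarrow> m = 0"
proof (induction m rule: less_induct)
  case (less m)
  then show ?case by (cases "m = 0") (auto simp: bin_digits_eq[of m])
qed

lemma bin_digits_eq_1_imp_power2: "bin_digits m = 1 \<Longrightarrow> \<exists>q. m = 2 ^ q"
proof (induction m rule: less_induct)
  case (less m)
  then have "m \<noteq> 0" by (metis bin_digits_0 zero_neq_one)
  show ?case
  proof (cases "even m")
    case True
    then have "bin_digits (m div 2) = 1" using less.prems by (simp add: bin_digits_eq[of m])
    moreover have "m div 2 < m" using \<open>m \<noteq> 0\<close> by simp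
    ultimately obtain q where "m div 2 = 2 ^ q" using less.IH by blast
    then have "m = 2 ^ Suc q" using True by auto
    then show ?thesis ..
  next
    case False
    then have "m mod 2 = 1" by presburger
    then have "m div 2 = 0" using less.prems by (simp add: bin_digits_eq[of m] bin_digits_eq_0_iff)
    then have "m = 1" using False by presburger
    then show ?thesis by (metis power_0)
  qed
qed

lemma power2_minus_1_eq_power2:
  assumes eq: "2 ^ d - 1 = (2::nat) ^ j"
  shows "d = 1"
proof (rule ccontr)
  assume "d \<noteq> 1"
  moreover have "d \<noteq> 0" using eq by (cases d) auto
  ultimately obtain e where d: "d = Suc (Suc e)" by (metis not0_implies_Suc One_nat_def)
  then have "odd ((2::nat) ^ d - 1)" by simp
  then have "odd ((2::nat) ^ j)" by (metis eq)
  then have "j = 0" by (cases j) simp_all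
  moreover have "(2::nat) ^ d \<ge> 4" using d by simp
  ultimately show False using eq by simp
qed

theorem theorem4p3:
  fixes t :: nat
  assumes "t > 0"
  shows "((\<forall>n::nat. \<exists>j::nat. odd_count t n = 2 ^ j) \<longleftrightarrow> (\<exists>q::nat. t = 2 ^ q))
       \<and> ((\<exists>q::nat. t = 2 ^ q) \<longrightarrow>
            (\<forall>n::nat. 2 * odd_count t n = 2 ^ bin_digits (n + t)))"
proof -
  have count: "2 * odd_count t n = 2 ^ bin_digits (n + t)" if "t = 2 ^ q" for q n
    using odd_count_power2[OF that] card_odd_binomials_below_half[of "n + t"] assms
    by (simp add: card_odd_binomials)
  have "\<exists>j. odd_count t n = 2 ^ j" if "t = 2 ^ q" for q n
  proof -
    have "bin_digits (n + t) \<noteq> 0" using assms by (simp add: bin_digits_eq_0_iff)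
    then have "odd_count t n = 2 ^ (bin_digits (n + t) - 1)"
      using count[OF that, of n] by (cases "bin_digits (n + t)") simp_all
    then show ?thesis ..
  qed
  moreover have "\<exists>q. t = 2 ^ q" if powers: "\<forall>n. \<exists>j. odd_count t n = 2 ^ j"
  proof -
    obtain j where "2 ^ bin_digits t - 1 = (2::nat) ^ j"
      using powers odd_count_self[OF assms] by metis
    then have "bin_digits t = 1" by (rule power2_minus_1_eq_power2)
    then show ?thesis by (rule bin_digits_eq_1_imp_power2)
  qed
  ultimately show ?thesis using count by blast
qed

end
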